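(* Every convex subset of $\mathbb{R}^2$ is closed-disk drawable.
   Context: For $A\subseteq\mathbb{R}^2$ let $N_{\le}(A)=\{x\in\mathbb{R}^2: |x-a|\le 1 \text{ for some } a\in A\}$. Let $\mathcal{D}_{\le,1}=\{N_{\le}(A_1): A_1\subseteq\mathbb{R}^2\}$ and for $n\ge 2$ let $\mathcal{D}_{\le,n}=\{D\cup N_{\le}(A_n): D\in\mathcal{D}_{\le,n-1}, A_n\subseteq\mathbb{R}^2\}$ if $n$ is odd and $\mathcal{D}_{\le,n}=\{D\setminus N_{\le}(A_n): D\in\mathcal{D}_{\le,n-1}, A_n\subseteq\mathbb{R}^2\}$ if $n$ is even. A set is closed-disk drawable if it lies in $\mathcal{D}_{\le}=\bigcup_{n\ge1}\mathcal{D}_{\le,n}$. *)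

theory Defs
  imports "HOL-Analysis.Analysis"
begin

definition N_le :: "(real^2) set \<Rightarrow> (real^2) set" where
  "N_le A = {x. \<exists>a\<in>A. dist x a \<le> 1}"

text \<open>D_le n is the family of sets in stage n (stages start at 1; D_le 0 is unused).\<close>
fun D_le :: "nat \<Rightarrow> (real^2) set set" where
  "D_le 0 = {}"
| "D_le (Suc 0) = {N_le A | A. True}"
| "D_le (Suc (Suc m)) =
     (if odd (Suc (Suc m))
      then {D \<union> N_le A | D A. D \<in> D_le (Suc m)}
      else {D - N_le A | D A. D \<in> D_le (Suc m)})"

definition closed_disk_drawable :: "(real^2) set \<Rightarrow> bool" where
  "closed_disk_drawable S \<longleftrightarrow> (\<exists>n\<ge>1. S \<in> D_le n)"

end

theory Submission
  imports Defs
begin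

text \<open>The complement of a convex set is a union of closed unit disks that miss the set: for
  \<open>x \<notin> C\<close> take a unit normal \<open>v\<close> of a line through \<open>x\<close> supporting \<open>C\<close>; the unit disk centred
  at \<open>x - v\<close> contains \<open>x\<close> and is disjoint from \<open>C\<close>. With \<open>A\<close> the set of points at distance
  greater than 1 from \<open>C\<close> this gives \<open>C = N(\<real>\<^sup>2) \<setminus> N(A)\<close>, a set of the second stage.\<close>

lemma convex_supporting_unit_normal:
  fixes C :: "'a::euclidean_space set"
  assumes "convex C" "x \<notin> C"
  obtains v where "norm v = 1" "\<And>c. c \<in> C \<Longrightarrow> v \<bullet> x \<le> v \<bullet> c"
proof (cases "C = {}")
  case True
  obtain b :: 'a where "b \<in> Basis" using nonempty_Basis by blast
  then show ?thesis using that True norm_Basis by blast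
next
  case False
  obtain a b where a: "a \<noteq> 0" "a \<bullet> x \<le> b" "\<And>c. c \<in> C \<Longrightarrow> b \<le> a \<bullet> c"
    using separating_hyperplane_sets[of "{x}" C] assms False by auto
  show ?thesis
  proof (rule that)
    show "norm (a /\<^sub>R norm a) = 1" using a(1) by simp
    fix c assume "c \<in> C"
    then have "a \<bullet> x \<le> a \<bullet> c" using a by force
    then show "(a /\<^sub>R norm a) \<bullet> x \<le> (a /\<^sub>R norm a) \<bullet> c"
      by (simp add: mult_left_mono)
  qed
qed

lemma dist_gt_one_behind_unit_normal:
  fixes c x v :: "'a::real_inner"
  assumes "norm v = 1" "v \<bullet> x \<le> v \<bullet> c" "c \<noteq> x"
  shows "1 < dist c (x - v)"
proof -
  have "(dist c (x - v))\<^sup>2 = (norm (c - x))\<^sup>2 + 2 * (v \<bullet> (c - x)) + 1"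
    using assms(1) by (simp add: norm_eq_1 dist_norm power2_norm_eq_inner algebra_simps inner_commute)
  moreover have "0 < (norm (c - x))\<^sup>2" "0 \<le> v \<bullet> (c - x)"
    using assms by (simp_all add: inner_diff_right)
  ultimately have "1 < (dist c (x - v))\<^sup>2" by linarith
  then show ?thesis by (metis not_less power_le_one zero_le_dist)
qed

lemma convex_complement_eq_Union_cball:
  fixes C :: "'a::euclidean_space set"
  assumes "convex C"
  shows "- C = (\<Union>a \<in> {a. \<forall>c\<in>C. 1 < dist c a}. cball a 1)"
proof (intro set_eqI iffI)
  fix x assume "x \<in> - C"
  then obtain v where v: "norm v = 1" "\<And>c. c \<in> C \<Longrightarrow> v \<bullet> x \<le> v \<bullet> c"
    using convex_supporting_unit_normal assms by blast
  have "\<forall>c\<in>C. 1 < dist c (x - v)"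
    using v \<open>x \<in> - C\<close> dist_gt_one_behind_unit_normal by fastforce
  moreover have "x \<in> cball (x - v) 1" using v(1) by (simp add: dist_norm)
  ultimately show "x \<in> (\<Union>a \<in> {a. \<forall>c\<in>C. 1 < dist c a}. cball a 1)" by blast
qed (force simp: dist_commute)

lemma N_le_eq_Union_cball: "N_le A = (\<Union>a\<in>A. cball a 1)"
  by (auto simp: N_le_def dist_commute)

theorem theorem2p4:
  fixes C :: "(real^2) set"
  assumes "convex C"
  shows "closed_disk_drawable C"
proof -
  define A where "A = {a. \<forall>c\<in>C. 1 < dist c a}"
  have "N_le UNIV = UNIV"
    unfolding N_le_eq_Union_cball by (metis UN_I UNIV_I centre_in_cball zero_le_one subset_antisym subsetI)
  moreover have "N_le A = - C"
    using convex_complement_eq_Union_cball[OF assms] unfolding N_le_eq_Union_cball A_def by simp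
  ultimately have "C = N_le UNIV - N_le A" by auto
  then have "C \<in> D_le 2"
    by (auto simp: numeral_2_eq_2)
  then show ?thesis
    unfolding closed_disk_drawable_def by (intro exI[of _ 2]) simp
qed

end
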